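(* For every positive integer $k$, $\theta\in[0,\pi]$, $s_4>0$ and $s_5\ge0$, the function $\frac{H-1}{\sqrt{-Q}}$ is monotonically non-increasing along $\xi(k,\theta,s_4,s_5)$ as long as the integral curve lies in $\mathcal B$.
   Context: Fix an integer $m\ge1$, $n=4m+3$. On $\mathbb R^8$ with coordinates $(X_1,X_2,X_3,Z_1,Z_2,Z_3,Z_4,W)$ set $G=X_1^2+2X_2^2+4mX_3^2$, $H=X_1+2X_2+4mX_3$, $R_1=2Z_1Z_2+4mZ_1Z_3$, $R_2=4Z_2-2Z_1Z_2+4mZ_3$, $R_3=(4m+8)Z_4-2Z_1Z_3-4Z_3$, $R_s=R_1+2R_2+4mR_3$, $Q=G+R_s+(n-1)\frac\epsilon2W-1$, and consider, for $\epsilon\in\{0,1\}$, the system $X_i'=X_i(G-\frac\epsilon2W-1)+R_i+\frac\epsilon2W$ ($i=1,2,3$), $Z_1'=2Z_1(X_1-X_2)$, $Z_2'=2Z_2(G-\frac\epsilon2W-X_2)$, $Z_3'=2Z_3(G-\frac\epsilon2W+X_2-2X_3)$, $Z_4'=2Z_4(G-\frac\epsilon2W-X_3)$, $W'=2W(G-\frac\epsilon2W)$. $\mathcal{RS}=\{Q\le0\}\cap\{H\le1\}\cap\{W\ge0\}\cap\{Z_1,Z_2,Z_3,Z_4\ge0\}\cap\{Z_4^2=Z_2Z_3\}$; $\mathcal B=\mathcal{RS}\cap\{1-Z_1\ge0\}\cap\{X_1-X_2\ge0\}\cap\{Z_2-Z_3\ge0\}\cap\{2(\sqrt{Z_2}-\sqrt{Z_3})+X_3-X_2\ge0\}\cap\{X_1,X_2,X_3\ge0\}$.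 Let $p_0=(1,0,0,0,0,0,0,0)$, $w_1=(-(4m+2)(2m+2),2m+2,2m+2,0,1,1,1,0)$, $w_2=(-4,2,0,0,1,0,0,0)$, $w_3=(-4(m+1)^2\sqrt2,2\sqrt2,(m+2)\sqrt2,0,\sqrt2,0,\tfrac{\sqrt2}{2},0)$, $w_4=(-1,0,\dots,0)$, $w_5=(-(4m+2)\frac\epsilon2,\frac\epsilon2,\frac\epsilon2,0,0,0,0,2)$, $w_6=(0,0,0,1,0,0,0,0)$, $w(\theta,k)=\frac{1+\cos\theta}{2}w_1+\frac{1-\cos\theta}{2}w_2+\frac{\sin\theta}{\sqrt2}w_3+k^2(1+\sin\theta)w_6$. $\xi(k,\theta,s_4,s_5)$ is the maximal integral curve with $\xi(\eta)=p_0+e^{2\eta}(w(\theta,k)+s_4w_4+s_5w_5)+O(e^{(2+\delta)\eta})$ as $\eta\to-\infty$ for some $\delta>0$, with $\epsilon=1$ if $s_5>0$ and $\epsilon=0$ if $s_5=0$. (Along such a curve with $s_4>0$, $Q<0$.) *)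

theory Defs
  imports "HOL-Analysis.Analysis"
begin

type_synonym pt = "real ^ 8"

definition vec8 :: "real \<Rightarrow> real \<Rightarrow> real \<Rightarrow> real \<Rightarrow> real \<Rightarrow> real \<Rightarrow> real \<Rightarrow> real \<Rightarrow> pt" where
  "vec8 a1 a2 a3 a4 a5 a6 a7 a8 = (\<chi> i. if i = 1 then a1 else if i = 2 then a2 else if i = 3 then a3
     else if i = 4 then a4 else if i = 5 then a5 else if i = 6 then a6 else if i = 7 then a7 else a8)"

definition X1 :: "pt \<Rightarrow> real" where "X1 x = x $ 1"
definition X2 :: "pt \<Rightarrow> real" where "X2 x = x $ 2"
definition X3 :: "pt \<Rightarrow> real" where "X3 x = x $ 3"
definition Z1 :: "pt \<Rightarrow> real" where "Z1 x = x $ 4"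
definition Z2 :: "pt \<Rightarrow> real" where "Z2 x = x $ 5"
definition Z3 :: "pt \<Rightarrow> real" where "Z3 x = x $ 6"
definition Z4 :: "pt \<Rightarrow> real" where "Z4 x = x $ 7"
definition Wc :: "pt \<Rightarrow> real" where "Wc x = x $ 8"

(* m is the fixed integer m >= 1, n = 4m+3; e is epsilon *)
definition Gf :: "nat \<Rightarrow> pt \<Rightarrow> real" where
  "Gf m x = X1 x ^ 2 + 2 * X2 x ^ 2 + 4 * real m * X3 x ^ 2"
definition Hf :: "nat \<Rightarrow> pt \<Rightarrow> real" where
  "Hf m x = X1 x + 2 * X2 x + 4 * real m * X3 x"
definition R1 :: "nat \<Rightarrow> pt \<Rightarrow> real" where
  "R1 m x = 2 * Z1 x * Z2 x + 4 * real m * Z1 x * Z3 x"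
definition R2 :: "nat \<Rightarrow> pt \<Rightarrow> real" where
  "R2 m x = 4 * Z2 x - 2 * Z1 x * Z2 x + 4 * real m * Z3 x"
definition R3 :: "nat \<Rightarrow> pt \<Rightarrow> real" where
  "R3 m x = (4 * real m + 8) * Z4 x - 2 * Z1 x * Z3 x - 4 * Z3 x"
definition Rs :: "nat \<Rightarrow> pt \<Rightarrow> real" where
  "Rs m x = R1 m x + 2 * R2 m x + 4 * real m * R3 m x"
definition nn :: "nat \<Rightarrow> nat" where "nn m = 4 * m + 3"
definition Qf :: "nat \<Rightarrow> real \<Rightarrow> pt \<Rightarrow> real" where
  "Qf m e x = Gf m x + Rs m x + (real (nn m) - 1) * (e / 2) * Wc x - 1"

definition Fld :: "nat \<Rightarrow> real \<Rightarrow> pt \<Rightarrow> pt" where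
  "Fld m e x = (let g = Gf m x - e / 2 * Wc x in
     vec8 (X1 x * (g - 1) + R1 m x + e / 2 * Wc x)
          (X2 x * (g - 1) + R2 m x + e / 2 * Wc x)
          (X3 x * (g - 1) + R3 m x + e / 2 * Wc x)
          (2 * Z1 x * (X1 x - X2 x))
          (2 * Z2 x * (g - X2 x))
          (2 * Z3 x * (g + X2 x - 2 * X3 x))
          (2 * Z4 x * (g - X3 x))
          (2 * Wc x * g))"

definition RS :: "nat \<Rightarrow> real \<Rightarrow> pt set" where
  "RS m e = {x. Qf m e x \<le> 0 \<and> Hf m x \<le> 1 \<and> Wc x \<ge> 0 \<and> Z1 x \<ge> 0 \<and> Z2 x \<ge> 0 \<and> Z3 x \<ge> 0
      \<and> Z4 x \<ge> 0 \<and> Z4 x ^ 2 = Z2 x * Z3 x}"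

definition Bset :: "nat \<Rightarrow> real \<Rightarrow> pt set" where
  "Bset m e = RS m e \<inter> {x. 1 - Z1 x \<ge> 0 \<and> X1 x - X2 x \<ge> 0 \<and> Z2 x - Z3 x \<ge> 0
      \<and> 2 * (sqrt (Z2 x) - sqrt (Z3 x)) + X3 x - X2 x \<ge> 0
      \<and> X1 x \<ge> 0 \<and> X2 x \<ge> 0 \<and> X3 x \<ge> 0}"

definition p0 :: pt where "p0 = vec8 1 0 0 0 0 0 0 0"
definition w1 :: "nat \<Rightarrow> pt" where
  "w1 m = vec8 (- (4 * real m + 2) * (2 * real m + 2)) (2 * real m + 2) (2 * real m + 2) 0 1 1 1 0"
definition w2 :: pt where "w2 = vec8 (-4) 2 0 0 1 0 0 0"
definition w3 :: "nat \<Rightarrow> pt" where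
  "w3 m = vec8 (- 4 * (real m + 1) ^ 2 * sqrt 2) (2 * sqrt 2) ((real m + 2) * sqrt 2) 0 (sqrt 2) 0 (sqrt 2 / 2) 0"
definition w4 :: pt where "w4 = vec8 (-1) 0 0 0 0 0 0 0"
definition w5 :: "nat \<Rightarrow> real \<Rightarrow> pt" where
  "w5 m e = vec8 (- (4 * real m + 2) * (e / 2)) (e / 2) (e / 2) 0 0 0 0 2"
definition w6 :: pt where "w6 = vec8 0 0 0 1 0 0 0 0"
definition wth :: "nat \<Rightarrow> real \<Rightarrow> nat \<Rightarrow> pt" where
  "wth m \<theta> k = ((1 + cos \<theta>) / 2) *\<^sub>R w1 m + ((1 - cos \<theta>) / 2) *\<^sub>R w2
      + (sin \<theta> / sqrt 2) *\<^sub>R w3 m + (real k ^ 2 * (1 + sin \<theta>)) *\<^sub>R w6"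

definition epsof :: "real \<Rightarrow> real" where "epsof s5 = (if s5 > 0 then 1 else 0)"

definition integral_curve :: "nat \<Rightarrow> real \<Rightarrow> (real \<Rightarrow> pt) \<Rightarrow> real set \<Rightarrow> bool" where
  "integral_curve m e xi J \<longleftrightarrow> open J \<and> is_interval J \<and> J \<noteq> {} \<and>
     (\<forall>t\<in>J. (xi has_vector_derivative Fld m e (xi t)) (at t))"

definition maximal_integral_curve :: "nat \<Rightarrow> real \<Rightarrow> (real \<Rightarrow> pt) \<Rightarrow> real set \<Rightarrow> bool" where
  "maximal_integral_curve m e xi J \<longleftrightarrow> integral_curve m e xi J \<and>
     (\<forall>J' xi'. integral_curve m e xi' J' \<and> J \<subseteq> J' \<and> (\<forall>t\<in>J. xi' t = xi t) \<longrightarrow> J' = J)"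

definition is_xi :: "nat \<Rightarrow> nat \<Rightarrow> real \<Rightarrow> real \<Rightarrow> real \<Rightarrow> (real \<Rightarrow> pt) \<Rightarrow> real set \<Rightarrow> bool" where
  "is_xi m k \<theta> s4 s5 xi J \<longleftrightarrow>
     maximal_integral_curve m (epsof s5) xi J \<and> (\<forall>b. \<exists>t\<in>J. t < b) \<and>
     (\<exists>\<delta>>0. \<exists>C. \<forall>\<^sub>F \<eta> in at_bot.
        norm (xi \<eta> - (p0 + exp (2 * \<eta>) *\<^sub>R (wth m \<theta> k + s4 *\<^sub>R w4 + s5 *\<^sub>R w5 m (epsof s5))))
          \<le> C * exp ((2 + \<delta>) * \<eta>))"

end

theory Submission
  imports Defs "HOL-Real_Asymp.Real_Asymp"
begin

(* Put P = 1 - H, q = -Q, D = q - P, E = q D - \<epsilon> W P^2 / 2 and g = G - \<epsilon> W / 2.  Along the flow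
     P' = g P + D,   q' = 2 g q + \<epsilon> W P,   W' = 2 g W,
     D' = (2 g - 1) D + P (G + \<epsilon> W / 2),   E' = (4 g - 1) E + P q G + \<epsilon> W P D / 2,
   and ((H - 1) / sqrt q)' = - E / q^(3/2).  The prescribed expansion of \<xi> at -\<infinity> gives
   P ~ s4 e^(2\<eta>), q ~ 2 s4 e^(2\<eta>) and W ~ 2 s5 e^(2\<eta>), so P, D, E > 0 (and W > 0 if \<epsilon> = 1)
   near -\<infinity>.  Since G \<ge> 0, each equation is linear in its own unknown plus a term that is
   nonnegative as long as the other signs hold, so the signs persist along the whole curve.  Hence
   the ratio is nonincreasing wherever the curve is defined. *)

definition Pf :: "nat \<Rightarrow> pt \<Rightarrow> real" where
  "Pf m x = 1 - Hf m x"

definition gf :: "nat \<Rightarrow> real \<Rightarrow> pt \<Rightarrow> real" where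
  "gf m e x = Gf m x - e / 2 * Wc x"

definition Df :: "nat \<Rightarrow> real \<Rightarrow> pt \<Rightarrow> real" where
  "Df m e x = - Qf m e x - Pf m x"

definition Ef :: "nat \<Rightarrow> real \<Rightarrow> pt \<Rightarrow> real" where
  "Ef m e x = - Qf m e x * Df m e x - e * Wc x * Pf m x ^ 2 / 2"

lemma has_vector_derivative_vec_nth:
  assumes "(f has_vector_derivative v) (at t)"
  shows "((\<lambda>t. f t $ i) has_real_derivative v $ i) (at t)"
  using bounded_linear.has_derivative[OF bounded_linear_vec_nth assms[unfolded has_vector_derivative_def]]
  by (simp add: has_field_derivative_def mult_commute_abs)

lemma Fld_nth:
  "Fld m e x $ 1 = X1 x * (gf m e x - 1) + R1 m x + e / 2 * Wc x"
  "Fld m e x $ 2 = X2 x * (gf m e x - 1) + R2 m x + e / 2 * Wc x"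
  "Fld m e x $ 3 = X3 x * (gf m e x - 1) + R3 m x + e / 2 * Wc x"
  "Fld m e x $ 4 = 2 * Z1 x * (X1 x - X2 x)"
  "Fld m e x $ 5 = 2 * Z2 x * (gf m e x - X2 x)"
  "Fld m e x $ 6 = 2 * Z3 x * (gf m e x + X2 x - 2 * X3 x)"
  "Fld m e x $ 7 = 2 * Z4 x * (gf m e x - X3 x)"
  "Fld m e x $ 8 = 2 * Wc x * gf m e x"
  by (simp_all add: Fld_def Let_def vec8_def gf_def)

lemma positive_of_derivative_ge_linear:
  fixes f f' c :: "real \<Rightarrow> real"
  assumes "t0 \<le> t1" and "f t0 > 0"
    and deriv: "\<And>t. t \<in> {t0..t1} \<Longrightarrow> (f has_real_derivative f' t) (at t)"
    and lower: "\<And>t. t \<in> {t0..t1} \<Longrightarrow> c t * f t \<le> f' t"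
    and nonneg: "\<And>t. t \<in> {t0..t1} \<Longrightarrow> 0 \<le> f t"
    and bound: "\<And>t. t \<in> {t0..t1} \<Longrightarrow> \<bar>c t\<bar> \<le> K"
  shows "f t1 > 0"
proof -
  have "f t0 * exp (K * t0) \<le> f t1 * exp (K * t1)"
  proof (rule DERIV_nonneg_imp_nondecreasing[OF \<open>t0 \<le> t1\<close>])
    fix t assume "t0 \<le> t" "t \<le> t1"
    then have t: "t \<in> {t0..t1}" by simp
    have "0 \<le> (c t + K) * f t"
      using bound[OF t] nonneg[OF t] by (intro mult_nonneg_nonneg) auto
    with lower[OF t] have "0 \<le> f' t + K * f t"
      by (simp add: algebra_simps)
    then have "0 \<le> (f' t + K * f t) * exp (K * t)"
      by simp
    moreover have "((\<lambda>t. f t * exp (K * t)) has_real_derivative (f' t + K * f t) * exp (K * t)) (at t)"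
      by (rule derivative_eq_intros deriv[OF t] refl | simp add: algebra_simps)+
    ultimately show "\<exists>y. ((\<lambda>t. f t * exp (K * t)) has_real_derivative y) (at t) \<and> 0 \<le> y"
      by blast
  qed
  moreover have "0 < f t0 * exp (K * t0)"
    using \<open>f t0 > 0\<close> by simp
  ultimately have "0 < f t1 * exp (K * t1)"
    by linarith
  then show ?thesis
    by (simp add: zero_less_mult_iff)
qed

lemma positive_pair_persists:
  fixes x y x' y' a b :: "real \<Rightarrow> real"
  assumes "t0 \<le> t1" and "x t0 > 0" and "y t0 > 0"
    and dx: "\<And>t. t \<in> {t0..t1} \<Longrightarrow> (x has_real_derivative x' t) (at t)"
    and dy: "\<And>t. t \<in> {t0..t1} \<Longrightarrow> (y has_real_derivative y' t) (at t)"
    and "continuous_on {t0..t1} a" and "continuous_on {t0..t1} b"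
    and lower: "\<And>t. t \<in> {t0..t1} \<Longrightarrow> 0 \<le> x t \<Longrightarrow> 0 \<le> y t \<Longrightarrow>
      a t * x t \<le> x' t \<and> b t * y t \<le> y' t"
  shows "x t1 > 0 \<and> y t1 > 0"
proof (rule ccontr)
  assume "\<not> (x t1 > 0 \<and> y t1 > 0)"
  have cont: "continuous_on {t0..t1} (\<lambda>t. min (x t) (y t))"
    using dx dy by (intro continuous_at_imp_continuous_on ballI continuous_intros DERIV_isCont) auto
  define S where "S = {t0..t1} \<inter> (\<lambda>t. min (x t) (y t)) -` {..0}"
  define s where "s = Inf S"
  have "t1 \<in> S" using \<open>\<not> (x t1 > 0 \<and> y t1 > 0)\<close> \<open>t0 \<le> t1\<close> by (auto simp: S_def)
  moreover have "bdd_below S" by (auto simp: S_def intro: bdd_belowI[of _ t0])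
  moreover have "closed S"
    unfolding S_def by (rule continuous_closed_preimage[OF cont]) auto
  ultimately have "s \<in> S" "s \<le> t1" unfolding s_def by (auto intro: closed_contains_Inf cInf_lower)
  have "s \<noteq> t0" using \<open>s \<in> S\<close> \<open>x t0 > 0\<close> \<open>y t0 > 0\<close> by (auto simp: S_def)
  with \<open>s \<in> S\<close> have "t0 < s" by (auto simp: S_def)
  have before: "0 < min (x t) (y t)" if "t \<in> {t0..<s}" for t
  proof (rule ccontr)
    assume "\<not> 0 < min (x t) (y t)"
    with that \<open>s \<le> t1\<close> have "t \<in> S" by (auto simp: S_def)
    then have "s \<le> t" unfolding s_def using \<open>bdd_below S\<close> by (rule cInf_lower)
    with that show False by simp
  qed
  have up_to: "0 \<le> x t \<and> 0 \<le> y t" if "t \<in> {t0..s}" for t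
  proof -
    have "continuous_on (closure {t0..<s}) (\<lambda>t. min (x t) (y t))"
      using \<open>t0 < s\<close> \<open>s \<le> t1\<close> by (auto intro: continuous_on_subset[OF cont])
    then have "0 \<le> min (x t) (y t)"
      by (rule continuous_ge_on_closure[where S = "{t0..<s}" and x = t and a = 0])
         (use that \<open>t0 < s\<close> before in \<open>auto intro: less_imp_le\<close>)
    then show ?thesis by simp
  qed
  have "compact ((\<lambda>t. \<bar>a t\<bar> + \<bar>b t\<bar>) ` {t0..t1})"
    using \<open>continuous_on {t0..t1} a\<close> \<open>continuous_on {t0..t1} b\<close>
    by (intro compact_continuous_image continuous_intros compact_Icc)
  then obtain K where K: "\<And>t. t \<in> {t0..t1} \<Longrightarrow> \<bar>a t\<bar> + \<bar>b t\<bar> \<le> K"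
    by (fastforce dest!: compact_imp_bounded simp: bounded_real)
  have "x s > 0"
    by (rule positive_of_derivative_ge_linear[of t0 s x x' a K])
       (use \<open>t0 < s\<close> \<open>x t0 > 0\<close> \<open>s \<le> t1\<close> dx lower up_to K in \<open>force+\<close>)
  moreover have "y s > 0"
    by (rule positive_of_derivative_ge_linear[of t0 s y y' b K])
       (use \<open>t0 < s\<close> \<open>y t0 > 0\<close> \<open>s \<le> t1\<close> dy lower up_to K in \<open>force+\<close>)
  ultimately show False using \<open>s \<in> S\<close> by (auto simp: S_def)
qed

lemma positive_persists:
  fixes f f' c :: "real \<Rightarrow> real"
  assumes "t0 \<le> t1" and "f t0 > 0"
    and "\<And>t. t \<in> {t0..t1} \<Longrightarrow> (f has_real_derivative f' t) (at t)"
    and "continuous_on {t0..t1} c"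
    and "\<And>t. t \<in> {t0..t1} \<Longrightarrow> 0 \<le> f t \<Longrightarrow> c t * f t \<le> f' t"
  shows "f t1 > 0"
  using positive_pair_persists[of t0 t1 f "\<lambda>_. 1" f' "\<lambda>_. 0" c "\<lambda>_. 0"] assms by auto

context
  fixes xi :: "real \<Rightarrow> pt" and m :: nat and e t :: real
  assumes xi_deriv: "(xi has_vector_derivative Fld m e (xi t)) (at t)"
begin

lemma Pf_along_field:
  "((\<lambda>t. Pf m (xi t)) has_real_derivative gf m e (xi t) * Pf m (xi t) + Df m e (xi t)) (at t)"
  unfolding Pf_def Hf_def X1_def X2_def X3_def
  by (rule derivative_eq_intros has_vector_derivative_vec_nth[OF xi_deriv] refl)+
     (simp add: Fld_nth[unfolded X1_def X2_def X3_def] Df_def Pf_def Hf_def Qf_def Gf_def gf_def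
        Rs_def R1_def R2_def R3_def nn_def X1_def X2_def X3_def algebra_simps)

lemma Qf_along_field:
  "((\<lambda>t. Qf m e (xi t)) has_real_derivative
     2 * gf m e (xi t) * Qf m e (xi t) - e * Wc (xi t) * Pf m (xi t)) (at t)"
  unfolding Qf_def Gf_def Rs_def R1_def R2_def R3_def X1_def X2_def X3_def Z1_def Z2_def Z3_def Z4_def Wc_def
  by (rule derivative_eq_intros has_vector_derivative_vec_nth[OF xi_deriv] refl)+
     (simp add: Fld_nth[unfolded X1_def X2_def X3_def Z1_def Z2_def Z3_def Z4_def Wc_def] Pf_def Hf_def gf_def Gf_def
        R1_def R2_def R3_def nn_def X1_def X2_def X3_def Z1_def Z2_def Z3_def Z4_def Wc_def algebra_simps power2_eq_square)

lemma Wc_along_field: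
  "((\<lambda>t. Wc (xi t)) has_real_derivative 2 * gf m e (xi t) * Wc (xi t)) (at t)"
  using has_vector_derivative_vec_nth[OF xi_deriv, of 8] by (simp add: Fld_nth Wc_def mult_ac)

lemma Df_along_field:
  "((\<lambda>t. Df m e (xi t)) has_real_derivative
     (2 * gf m e (xi t) - 1) * Df m e (xi t) + Pf m (xi t) * (Gf m (xi t) + e * Wc (xi t) / 2)) (at t)"
  unfolding Df_def
  by (rule derivative_eq_intros Qf_along_field Pf_along_field refl)+
     (simp add: Df_def gf_def algebra_simps)

lemma Ef_along_field:
  "((\<lambda>t. Ef m e (xi t)) has_real_derivative
     (4 * gf m e (xi t) - 1) * Ef m e (xi t) + Pf m (xi t) * - Qf m e (xi t) * Gf m (xi t)
       + e * Wc (xi t) * Pf m (xi t) * Df m e (xi t) / 2) (at t)"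
  unfolding Ef_def
  by (rule derivative_eq_intros Qf_along_field Pf_along_field Df_along_field Wc_along_field refl | simp)+
     (simp add: Df_def gf_def field_simps power2_eq_square)

lemma ratio_along_field:
  assumes "0 < - Qf m e (xi t)"
  shows "((\<lambda>t. (Hf m (xi t) - 1) / sqrt (- Qf m e (xi t))) has_real_derivative
     - Ef m e (xi t) / (- Qf m e (xi t) * sqrt (- Qf m e (xi t)))) (at t)"
proof -
  define r where "r = sqrt (- Qf m e (xi t))"
  have r: "r > 0" "Qf m e (xi t) = - (r * r)" using assms by (simp_all add: r_def)
  have "((\<lambda>t. - Pf m (xi t) / sqrt (- Qf m e (xi t))) has_real_derivative
     (- (gf m e (xi t) * Pf m (xi t) + Df m e (xi t)) * r
       - - Pf m (xi t) * (inverse r / 2 * - (2 * gf m e (xi t) * Qf m e (xi t) - e * Wc (xi t) * Pf m (xi t))))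
       / (r * r)) (at t)"
    unfolding r_def
    by (intro DERIV_divide DERIV_minus Pf_along_field DERIV_chain2[OF DERIV_real_sqrt] Qf_along_field)
       (use assms in auto)
  moreover have "(- (gf m e (xi t) * Pf m (xi t) + Df m e (xi t)) * r
       - - Pf m (xi t) * (inverse r / 2 * - (2 * gf m e (xi t) * Qf m e (xi t) - e * Wc (xi t) * Pf m (xi t))))
       / (r * r) = - Ef m e (xi t) / (- Qf m e (xi t) * r)"
    using r unfolding Ef_def Df_def by (simp add: field_simps power2_eq_square)
  ultimately show ?thesis by (simp add: Pf_def r_def)
qed

end

lemma Gf_nonneg: "0 \<le> Gf m x"
  unfolding Gf_def by (intro add_nonneg_nonneg mult_nonneg_nonneg) auto

lemma integral_curve_Icc_subset:
  assumes "integral_curve m e xi J" and "t0 \<in> J" and "t1 \<in> J"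
  shows "{t0..t1} \<subseteq> J"
  using assms unfolding integral_curve_def by (auto intro: mem_is_interval_1_I)

lemma integral_curve_continuous_gf:
  assumes "integral_curve m e xi J"
  shows "continuous_on J (\<lambda>t. gf m e (xi t))"
proof (intro continuous_at_imp_continuous_on ballI)
  fix t assume "t \<in> J"
  with assms have "isCont xi t"
    unfolding integral_curve_def by (blast intro: has_vector_derivative_continuous)
  then show "isCont (\<lambda>t. gf m e (xi t)) t"
    unfolding gf_def Gf_def X1_def X2_def X3_def Wc_def by (intro continuous_intros)
qed

context
  fixes m :: nat and e t0 t1 :: real and xi :: "real \<Rightarrow> pt" and J :: "real set"
  assumes curve: "integral_curve m e xi J" and "t0 \<in> J" and "t1 \<in> J" and "t0 \<le> t1"
begin

lemma integral_curve_derivative_Icc: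
  "t \<in> {t0..t1} \<Longrightarrow> (xi has_vector_derivative Fld m e (xi t)) (at t)"
  using curve integral_curve_Icc_subset[OF curve \<open>t0 \<in> J\<close> \<open>t1 \<in> J\<close>]
  unfolding integral_curve_def by blast

lemma integral_curve_continuous_gf_Icc: "continuous_on {t0..t1} (\<lambda>t. gf m e (xi t))"
  using integral_curve_Icc_subset[OF curve \<open>t0 \<in> J\<close> \<open>t1 \<in> J\<close>]
  by (rule continuous_on_subset[OF integral_curve_continuous_gf[OF curve]])

lemma Wc_positive_persists:
  assumes "0 < Wc (xi t0)"
  shows "0 < Wc (xi t1)"
  by (rule positive_persists[where f = "\<lambda>s. Wc (xi s)" and c = "\<lambda>s. 2 * gf m e (xi s)"])
     (use assms \<open>t0 \<le> t1\<close> integral_curve_continuous_gf_Icc in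
      \<open>auto intro!: continuous_intros Wc_along_field integral_curve_derivative_Icc\<close>)

lemma Pf_Df_positive_persist:
  assumes eW: "\<And>t. t \<in> {t0..t1} \<Longrightarrow> 0 \<le> e * Wc (xi t)"
    and "0 < Pf m (xi t0)" and "0 < Df m e (xi t0)"
  shows "0 < Pf m (xi t1) \<and> 0 < Df m e (xi t1)"
proof (rule positive_pair_persists[where x = "\<lambda>s. Pf m (xi s)" and y = "\<lambda>s. Df m e (xi s)"
    and a = "\<lambda>s. gf m e (xi s)" and b = "\<lambda>s. 2 * gf m e (xi s) - 1"
    and x' = "\<lambda>s. gf m e (xi s) * Pf m (xi s) + Df m e (xi s)"
    and y' = "\<lambda>s. (2 * gf m e (xi s) - 1) * Df m e (xi s) + Pf m (xi s) * (Gf m (xi s) + e * Wc (xi s) / 2)"])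
  fix s assume s: "s \<in> {t0..t1}" "0 \<le> Pf m (xi s)" "0 \<le> Df m e (xi s)"
  have "0 \<le> Pf m (xi s) * (Gf m (xi s) + e * Wc (xi s) / 2)"
    using s eW[of s] Gf_nonneg[of m "xi s"] by (intro mult_nonneg_nonneg) auto
  with s show "gf m e (xi s) * Pf m (xi s) \<le> gf m e (xi s) * Pf m (xi s) + Df m e (xi s) \<and>
    (2 * gf m e (xi s) - 1) * Df m e (xi s)
      \<le> (2 * gf m e (xi s) - 1) * Df m e (xi s) + Pf m (xi s) * (Gf m (xi s) + e * Wc (xi s) / 2)"
    by simp
qed (use assms \<open>t0 \<le> t1\<close> integral_curve_continuous_gf_Icc in
     \<open>auto intro!: continuous_intros Pf_along_field Df_along_field integral_curve_derivative_Icc\<close>)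

lemma Ef_positive_persists:
  assumes eW: "\<And>t. t \<in> {t0..t1} \<Longrightarrow> 0 \<le> e * Wc (xi t)"
    and PD: "\<And>t. t \<in> {t0..t1} \<Longrightarrow> 0 < Pf m (xi t) \<and> 0 < Df m e (xi t)"
    and "0 < Ef m e (xi t0)"
  shows "0 < Ef m e (xi t1)"
proof (rule positive_persists[where f = "\<lambda>s. Ef m e (xi s)" and c = "\<lambda>s. 4 * gf m e (xi s) - 1"
    and f' = "\<lambda>s. (4 * gf m e (xi s) - 1) * Ef m e (xi s) + Pf m (xi s) * - Qf m e (xi s) * Gf m (xi s)
      + e * Wc (xi s) * Pf m (xi s) * Df m e (xi s) / 2"])
  fix s assume s: "s \<in> {t0..t1}"
  have "0 < - Qf m e (xi s)" using PD[OF s] by (simp add: Df_def)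
  with PD[OF s] have "0 \<le> Pf m (xi s) * - Qf m e (xi s) * Gf m (xi s)"
    using Gf_nonneg[of m "xi s"] by (intro mult_nonneg_nonneg) auto
  moreover have "0 \<le> e * Wc (xi s) * (Pf m (xi s) * Df m e (xi s))"
    using PD[OF s] eW[OF s] by simp
  ultimately show "(4 * gf m e (xi s) - 1) * Ef m e (xi s) \<le> (4 * gf m e (xi s) - 1) * Ef m e (xi s)
    + Pf m (xi s) * - Qf m e (xi s) * Gf m (xi s) + e * Wc (xi s) * Pf m (xi s) * Df m e (xi s) / 2"
    by (simp add: mult.assoc)
qed (use assms \<open>t0 \<le> t1\<close> integral_curve_derivative_Icc[THEN Ef_along_field] integral_curve_continuous_gf_Icc in
     \<open>auto intro!: continuous_intros\<close>)

end

lemma signs_persist_along_integral_curve: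
  assumes curve: "integral_curve m e xi J" and "t0 \<in> J" and "t1 \<in> J" and "t0 \<le> t1"
    and "0 \<le> e" and "e \<noteq> 0 \<Longrightarrow> 0 < Wc (xi t0)"
    and "0 < Pf m (xi t0)" and "0 < Df m e (xi t0)" and "0 < Ef m e (xi t0)"
  shows "0 < Pf m (xi t1) \<and> 0 < Df m e (xi t1) \<and> 0 < Ef m e (xi t1)"
proof -
  have J: "t \<in> J" if "t \<in> {t0..t1}" for t
    using integral_curve_Icc_subset[OF curve \<open>t0 \<in> J\<close> \<open>t1 \<in> J\<close>] that by blast
  have eW: "0 \<le> e * Wc (xi t)" if "t \<in> {t0..t1}" for t
    using Wc_positive_persists[OF curve \<open>t0 \<in> J\<close> J[OF that]] that assms(5,6)
    by (cases "e = 0") auto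
  have PD: "0 < Pf m (xi t) \<and> 0 < Df m e (xi t)" if "t \<in> {t0..t1}" for t
    using Pf_Df_positive_persist[OF curve \<open>t0 \<in> J\<close> J[OF that]] that eW assms(7,8) by auto
  show ?thesis
    using Ef_positive_persists[OF curve \<open>t0 \<in> J\<close> \<open>t1 \<in> J\<close> \<open>t0 \<le> t1\<close> eW PD] PD[of t1] assms(4,9)
    by auto
qed

lemma ratio_nonincreasing_along_integral_curve:
  assumes curve: "integral_curve m e xi J" and "\<eta>1 \<in> J" and "\<eta>2 \<in> J" and "\<eta>1 \<le> \<eta>2"
    and signs: "\<And>t. t \<in> {\<eta>1..\<eta>2} \<Longrightarrow> 0 < - Qf m e (xi t) \<and> 0 \<le> Ef m e (xi t)"
  shows "(Hf m (xi \<eta>2) - 1) / sqrt (- Qf m e (xi \<eta>2)) \<le> (Hf m (xi \<eta>1) - 1) / sqrt (- Qf m e (xi \<eta>1))"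
proof (rule DERIV_nonpos_imp_nonincreasing[OF \<open>\<eta>1 \<le> \<eta>2\<close>])
  fix t assume "\<eta>1 \<le> t" "t \<le> \<eta>2"
  then have t: "t \<in> {\<eta>1..\<eta>2}" by simp
  with curve integral_curve_Icc_subset[OF curve \<open>\<eta>1 \<in> J\<close> \<open>\<eta>2 \<in> J\<close>]
  have "(xi has_vector_derivative Fld m e (xi t)) (at t)"
    unfolding integral_curve_def by blast
  moreover have "- Ef m e (xi t) / (- Qf m e (xi t) * sqrt (- Qf m e (xi t))) \<le> 0"
    using signs[OF t] by (intro divide_nonpos_pos mult_pos_pos) auto
  ultimately show "\<exists>y. ((\<lambda>t. (Hf m (xi t) - 1) / sqrt (- Qf m e (xi t))) has_real_derivative y) (at t) \<and> y \<le> 0"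
    using signs[OF t] ratio_along_field by blast
qed

definition Hlin :: "nat \<Rightarrow> pt \<Rightarrow> real" where
  "Hlin m v = v$1 + 2 * v$2 + 4 * real m * v$3"

definition Qlin :: "nat \<Rightarrow> real \<Rightarrow> pt \<Rightarrow> real" where
  "Qlin m e v = 2 * v$1 + 8 * v$5 - 8 * real m * v$6 + 4 * real m * (4 * real m + 8) * v$7
     + (4 * real m + 2) * e / 2 * v$8"

lemma Hf_p0_plus: "Hf m (p0 + s *\<^sub>R v) = 1 + s * Hlin m v"
  by (simp add: Hf_def Hlin_def X1_def X2_def X3_def p0_def vec8_def algebra_simps)

lemma Qf_p0_plus:
  "Qf m e (p0 + s *\<^sub>R v) = s * (Qlin m e v
     + s * ((v$1)\<^sup>2 + 2 * (v$2)\<^sup>2 + 4 * real m * (v$3)\<^sup>2 - 2 * v$4 * v$5 - 4 * real m * v$4 * v$6))"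
  by (simp add: Qf_def Qlin_def Gf_def Rs_def R1_def R2_def R3_def nn_def X1_def X2_def X3_def Z1_def Z2_def
      Z3_def Z4_def Wc_def p0_def vec8_def algebra_simps power2_eq_square)

lemma Wc_p0_plus: "Wc (p0 + s *\<^sub>R v) = s * v$8"
  by (simp add: Wc_def p0_def vec8_def)

lemma rescaled_limits:
  assumes "((\<lambda>\<eta>. exp (-2 * \<eta>) *\<^sub>R (xi \<eta> - p0)) \<longlongrightarrow> V) at_bot"
  shows "((\<lambda>\<eta>. exp (-2 * \<eta>) * Pf m (xi \<eta>)) \<longlongrightarrow> - Hlin m V) at_bot"
    and "((\<lambda>\<eta>. exp (-2 * \<eta>) * - Qf m e (xi \<eta>)) \<longlongrightarrow> - Qlin m e V) at_bot"
    and "((\<lambda>\<eta>. exp (-2 * \<eta>) * Wc (xi \<eta>)) \<longlongrightarrow> V$8) at_bot"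
proof -
  define z where "z \<eta> = exp (-2 * \<eta>) *\<^sub>R (xi \<eta> - p0)" for \<eta>
  define quad where "quad v = (v$1)\<^sup>2 + 2 * (v$2)\<^sup>2 + 4 * real m * (v$3)\<^sup>2 - 2 * v$4 * v$5 - 4 * real m * v$4 * v$6"
    for v :: pt
  have rescale: "exp (-2 * \<eta>) * f (xi \<eta>) = f (p0 + exp (2 * \<eta>) *\<^sub>R z \<eta>) / exp (2 * \<eta>)"
    for f :: "pt \<Rightarrow> real" and \<eta>
    by (simp add: z_def exp_minus field_simps flip: exp_add)
  have z: "((\<lambda>\<eta>. z \<eta> $ i) \<longlongrightarrow> V $ i) at_bot" for i
    using assms unfolding z_def[symmetric] by (rule tendsto_vec_nth)
  have exp0: "((\<lambda>\<eta>::real. exp (2 * \<eta>)) \<longlongrightarrow> 0) at_bot" by real_asymp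
  have "exp (-2 * \<eta>) * Pf m (xi \<eta>) = - Hlin m (z \<eta>)" for \<eta>
    unfolding rescale[where f = "Pf m"] unfolding Pf_def Hf_p0_plus by simp
  moreover have "((\<lambda>\<eta>. - Hlin m (z \<eta>)) \<longlongrightarrow> - Hlin m V) at_bot"
    unfolding Hlin_def by (intro tendsto_intros z)
  ultimately show "((\<lambda>\<eta>. exp (-2 * \<eta>) * Pf m (xi \<eta>)) \<longlongrightarrow> - Hlin m V) at_bot"
    by simp
  have "exp (-2 * \<eta>) * - Qf m e (xi \<eta>) = - (Qlin m e (z \<eta>) + exp (2 * \<eta>) * quad (z \<eta>))" for \<eta>
    unfolding mult_minus_right rescale[where f = "Qf m e"] Qf_p0_plus quad_def[symmetric] by simp
  moreover have "((\<lambda>\<eta>. - (Qlin m e (z \<eta>) + exp (2 * \<eta>) * quad (z \<eta>))) \<longlongrightarrow> - (Qlin m e V + 0 * quad V)) at_bot"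
  proof (intro tendsto_minus tendsto_add tendsto_mult exp0)
    show "((\<lambda>\<eta>. Qlin m e (z \<eta>)) \<longlongrightarrow> Qlin m e V) at_bot"
      unfolding Qlin_def by (intro tendsto_intros z)
    show "((\<lambda>\<eta>. quad (z \<eta>)) \<longlongrightarrow> quad V) at_bot"
      unfolding quad_def by (intro tendsto_intros z)
  qed
  ultimately show "((\<lambda>\<eta>. exp (-2 * \<eta>) * - Qf m e (xi \<eta>)) \<longlongrightarrow> - Qlin m e V) at_bot"
    by simp
  show "((\<lambda>\<eta>. exp (-2 * \<eta>) * Wc (xi \<eta>)) \<longlongrightarrow> V$8) at_bot"
    unfolding rescale[where f = Wc] unfolding Wc_p0_plus by (simp add: z)
qed

lemma initial_direction_coefficients:
  fixes m k :: nat and \<theta> s4 s5 e :: real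
  defines "V \<equiv> wth m \<theta> k + s4 *\<^sub>R w4 + s5 *\<^sub>R w5 m e"
  shows "Hlin m V = - s4" and "Qlin m e V = - 2 * s4" and "V$8 = 2 * s5"
  unfolding V_def Hlin_def Qlin_def wth_def w1_def w2_def w3_def w4_def w5_def w6_def
  by (simp_all add: vec8_def algebra_simps power2_eq_square add_divide_distrib[symmetric]
      diff_divide_distrib[symmetric]) (simp_all add: field_simps)

lemma is_xi_rescaled_tendsto:
  assumes "is_xi m k \<theta> s4 s5 xi J"
  shows "((\<lambda>\<eta>. exp (-2 * \<eta>) *\<^sub>R (xi \<eta> - p0))
    \<longlongrightarrow> wth m \<theta> k + s4 *\<^sub>R w4 + s5 *\<^sub>R w5 m (epsof s5)) at_bot"
    (is "((\<lambda>\<eta>. _) \<longlongrightarrow> ?V) _")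
proof -
  obtain \<delta> C where "\<delta> > 0" and bound: "\<forall>\<^sub>F \<eta> in at_bot.
      norm (xi \<eta> - (p0 + exp (2 * \<eta>) *\<^sub>R ?V)) \<le> C * exp ((2 + \<delta>) * \<eta>)"
    using assms unfolding is_xi_def by blast
  have "((\<lambda>\<eta>. exp (-2 * \<eta>) *\<^sub>R (xi \<eta> - p0) - ?V) \<longlongrightarrow> 0) at_bot"
  proof (rule Lim_null_comparison)
    show "\<forall>\<^sub>F \<eta> in at_bot. norm (exp (-2 * \<eta>) *\<^sub>R (xi \<eta> - p0) - ?V) \<le> C * exp (\<delta> * \<eta>)"
    proof (rule eventually_mono[OF bound])
      fix \<eta> :: real
      assume "norm (xi \<eta> - (p0 + exp (2 * \<eta>) *\<^sub>R ?V)) \<le> C * exp ((2 + \<delta>) * \<eta>)"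
      have "exp (-2 * \<eta>) *\<^sub>R (xi \<eta> - p0) - ?V = exp (-2 * \<eta>) *\<^sub>R (xi \<eta> - (p0 + exp (2 * \<eta>) *\<^sub>R ?V))"
        by (simp add: algebra_simps flip: exp_add)
      then have "norm (exp (-2 * \<eta>) *\<^sub>R (xi \<eta> - p0) - ?V) = exp (-2 * \<eta>) * norm (xi \<eta> - (p0 + exp (2 * \<eta>) *\<^sub>R ?V))"
        by simp
      also have "\<dots> \<le> exp (-2 * \<eta>) * (C * exp ((2 + \<delta>) * \<eta>))"
        using \<open>norm _ \<le> _\<close> by (intro mult_left_mono) auto
      also have "\<dots> = C * exp (\<delta> * \<eta>)"
        by (simp add: algebra_simps flip: exp_add)
      finally show "norm (exp (-2 * \<eta>) *\<^sub>R (xi \<eta> - p0) - ?V) \<le> C * exp (\<delta> * \<eta>)" .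
    qed
    show "((\<lambda>\<eta>. C * exp (\<delta> * \<eta>)) \<longlongrightarrow> 0) at_bot"
      using \<open>\<delta> > 0\<close> by real_asymp
  qed
  then show ?thesis by (simp add: LIM_zero_iff)
qed

lemma signs_near_minus_infinity:
  assumes "is_xi m k \<theta> s4 s5 xi J" and "s4 > 0"
  defines "e \<equiv> epsof s5"
  shows "\<forall>\<^sub>F \<eta> in at_bot. 0 < Pf m (xi \<eta>) \<and> 0 < Df m e (xi \<eta>) \<and> 0 < Ef m e (xi \<eta>)
    \<and> (0 < s5 \<longrightarrow> 0 < Wc (xi \<eta>))"
proof -
  define u where "u \<eta> = exp (-2 * \<eta>)" for \<eta> :: real
  define p where "p \<eta> = u \<eta> * Pf m (xi \<eta>)" for \<eta>
  define q where "q \<eta> = u \<eta> * - Qf m e (xi \<eta>)" for \<eta>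
  define w where "w \<eta> = u \<eta> * Wc (xi \<eta>)" for \<eta>
  note rescaled = is_xi_rescaled_tendsto[OF assms(1), folded e_def]
  have p: "(p \<longlongrightarrow> s4) at_bot"
    using rescaled_limits(1)[OF rescaled, of m]
    unfolding initial_direction_coefficients by (simp add: p_def[abs_def] u_def)
  have q: "(q \<longlongrightarrow> 2 * s4) at_bot"
    using rescaled_limits(2)[OF rescaled, of m e]
    unfolding initial_direction_coefficients by (simp add: q_def[abs_def] u_def)
  have w: "(w \<longlongrightarrow> 2 * s5) at_bot"
    using rescaled_limits(3)[OF rescaled]
    unfolding initial_direction_coefficients by (simp add: w_def[abs_def] u_def)
  have exp0: "((\<lambda>\<eta>::real. exp (2 * \<eta>)) \<longlongrightarrow> 0) at_bot"
    by real_asymp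
  have "((\<lambda>\<eta>. q \<eta> * (q \<eta> - p \<eta>) - e * exp (2 * \<eta>) * w \<eta> * (p \<eta>)\<^sup>2 / 2)
      \<longlongrightarrow> 2 * s4 * (2 * s4 - s4) - e * 0 * (2 * s5) * s4\<^sup>2 / 2) at_bot"
    by (intro tendsto_intros p q w exp0) auto
  then have "\<forall>\<^sub>F \<eta> in at_bot. 0 < q \<eta> * (q \<eta> - p \<eta>) - e * exp (2 * \<eta>) * w \<eta> * (p \<eta>)\<^sup>2 / 2"
    by (rule order_tendstoD(1)) (use \<open>s4 > 0\<close> in simp)
  moreover have "\<forall>\<^sub>F \<eta> in at_bot. 0 < q \<eta> - p \<eta>"
    using tendsto_diff[OF q p] by (rule order_tendstoD(1)) (use \<open>s4 > 0\<close> in simp)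
  moreover have "\<forall>\<^sub>F \<eta> in at_bot. 0 < p \<eta>"
    using p \<open>s4 > 0\<close> by (rule order_tendstoD(1))
  moreover have "\<forall>\<^sub>F \<eta> in at_bot. 0 < s5 \<longrightarrow> 0 < w \<eta>"
    using order_tendstoD(1)[OF w, of 0] by (cases "0 < s5") auto
  ultimately show ?thesis
  proof eventually_elim
    case (elim \<eta>)
    have u: "0 < u \<eta>" "exp (2 * \<eta>) * u \<eta> = 1" by (simp_all add: u_def flip: exp_add)
    have "q \<eta> - p \<eta> = u \<eta> * Df m e (xi \<eta>)"
      by (simp add: p_def q_def Df_def algebra_simps)
    moreover have "q \<eta> * (q \<eta> - p \<eta>) - e * exp (2 * \<eta>) * w \<eta> * (p \<eta>)\<^sup>2 / 2
        = u \<eta> * u \<eta> * Ef m e (xi \<eta>)"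
      using u(2) by (simp add: p_def q_def w_def Ef_def Df_def power2_eq_square algebra_simps)
    ultimately show ?case
      using elim u(1) by (simp add: p_def w_def zero_less_mult_iff)
  qed
qed

lemma signs_along_is_xi:
  assumes xi: "is_xi m k \<theta> s4 s5 xi J" and "s4 > 0" and "t \<in> J"
  shows "0 < - Qf m (epsof s5) (xi t) \<and> 0 < Ef m (epsof s5) (xi t)"
proof -
  define e where "e = epsof s5"
  have curve: "integral_curve m e xi J"
    using xi unfolding is_xi_def maximal_integral_curve_def e_def by blast
  obtain B where B: "\<And>\<eta>. \<eta> \<le> B \<Longrightarrow> 0 < Pf m (xi \<eta>) \<and> 0 < Df m e (xi \<eta>) \<and> 0 < Ef m e (xi \<eta>)
      \<and> (0 < s5 \<longrightarrow> 0 < Wc (xi \<eta>))"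
    using signs_near_minus_infinity[OF xi \<open>s4 > 0\<close>] unfolding eventually_at_bot_linorder e_def by blast
  obtain t0 where "t0 \<in> J" and "t0 \<le> B" and "t0 \<le> t"
    using xi unfolding is_xi_def by (metis less_eq_real_def min_less_iff_conj)
  have "0 \<le> e" and "e \<noteq> 0 \<Longrightarrow> 0 < Wc (xi t0)"
    using B[OF \<open>t0 \<le> B\<close>] by (auto simp: e_def epsof_def split: if_splits)
  with B[OF \<open>t0 \<le> B\<close>] have "0 < Pf m (xi t) \<and> 0 < Df m e (xi t) \<and> 0 < Ef m e (xi t)"
    by (intro signs_persist_along_integral_curve[OF curve \<open>t0 \<in> J\<close> \<open>t \<in> J\<close> \<open>t0 \<le> t\<close>]) auto
  then show ?thesis by (simp add: Df_def e_def)
qed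

theorem proposition4p7:
  fixes m k :: nat and \<theta> s4 s5 :: real and xi :: "real \<Rightarrow> real ^ 8" and J :: "real set"
  assumes "m \<ge> 1" and "k \<ge> 1"
    and "0 \<le> \<theta>" and "\<theta> \<le> pi" and "s4 > 0" and "s5 \<ge> 0"
    and "is_xi m k \<theta> s4 s5 xi J"
  shows "\<forall>\<eta>1\<in>J. \<forall>\<eta>2\<in>J. \<eta>1 \<le> \<eta>2 \<and> (\<forall>t\<in>{\<eta>1..\<eta>2}. xi t \<in> Bset m (epsof s5)) \<longrightarrow>
           (Hf m (xi \<eta>2) - 1) / sqrt (- Qf m (epsof s5) (xi \<eta>2))
             \<le> (Hf m (xi \<eta>1) - 1) / sqrt (- Qf m (epsof s5) (xi \<eta>1))"
proof (intro ballI impI, elim conjE)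
  fix \<eta>1 \<eta>2 assume "\<eta>1 \<in> J" "\<eta>2 \<in> J" "\<eta>1 \<le> \<eta>2"
  have curve: "integral_curve m (epsof s5) xi J"
    using \<open>is_xi m k \<theta> s4 s5 xi J\<close> unfolding is_xi_def maximal_integral_curve_def by blast
  have "t \<in> J" if "t \<in> {\<eta>1..\<eta>2}" for t
    using that integral_curve_Icc_subset[OF curve \<open>\<eta>1 \<in> J\<close> \<open>\<eta>2 \<in> J\<close>] by blast
  with signs_along_is_xi[OF \<open>is_xi m k \<theta> s4 s5 xi J\<close> \<open>s4 > 0\<close>]
  have "0 < - Qf m (epsof s5) (xi t) \<and> 0 \<le> Ef m (epsof s5) (xi t)" if "t \<in> {\<eta>1..\<eta>2}" for t
    using that by (simp add: less_imp_le)
  then show "(Hf m (xi \<eta>2) - 1) / sqrt (- Qf m (epsof s5) (xi \<eta>2))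
      \<le> (Hf m (xi \<eta>1) - 1) / sqrt (- Qf m (epsof s5) (xi \<eta>1))"
    by (rule ratio_nonincreasing_along_integral_curve[OF curve \<open>\<eta>1 \<in> J\<close> \<open>\<eta>2 \<in> J\<close> \<open>\<eta>1 \<le> \<eta>2\<close>])
qed

end
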